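(* Let $\mathcal{T}=(\mathcal{V},\mathcal{E})$ obey the LC-PF model and covariance assumption of the context, and let $k_1$ be as defined there. Let $\mathcal{E}_{full}\supseteq\mathcal{E}$ be a set of candidate edges on $\mathcal{V}$. Suppose that for all $a\neq b$ in $\mathcal{V}$, real numbers $\hat\phi_{ab}$ (empirical estimates) satisfy $|\hat\phi_{ab}-\phi_{ab}|<k_1/2$. Then the minimum weight spanning tree of $(\mathcal{V},\mathcal{E}_{full})$ with edge weights $\hat\phi_{ab}$ (the output of Algorithm 1) has edge set exactly $\mathcal{E}$.
   Context: $\mathcal{T}=(\mathcal{V},\mathcal{E})$ is a tree with a distinguished root (substation) of degree one. Each edge $(ab)$ has resistance $r_{ab}>0$ and reactance $x_{ab}>0$; $r_{\min},x_{\min}$ denote their minimum values. Let $H_{1/r},H_{1/x}$ be the weighted Laplacians with edge weights $1/r_{ab}$, $1/x_{ab}$, with the root row and column removed. Non-root nodes have random injections $p_a,q_a$. The LC-PF model gives $v=H_{1/r}^{-1}p+H_{1/x}^{-1}q$ and $\theta=H_{1/x}^{-1}p-H_{1/r}^{-1}q$; the root voltage is constant. Covariance assumption: $\Omega_p,\Omega_q$ are the covariances of $p,q$, and $\Omega_{pq}=\mathbb{E}[(p-\mathbb{E}p)(q-\mathbb{E}q)^T]=\Omega_{qp}^T$. For distinct non-root $a,b$, $\Omega_p(a,b)=\Omega_q(a,b)=\Omega_{qp}(a,b)=0$, and $\Omega_{qp}(a,a)\ge0$. Define $\phi_{ab}=\mathbb{E}[((v_a-\mathbb{E}v_a)-(v_b-\mathbb{E}v_b))^2]$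 and $k_1=\min(r_{\min}^2,x_{\min}^2)\min_{d}\big(\Omega_p(d,d)+\Omega_q(d,d)+2\Omega_{pq}(d,d)\big)$, the inner minimum being over non-root nodes $d$. *)

theory Defs
  imports "HOL-Probability.Probability"
begin

definition adj :: "'v set set \<Rightarrow> ('v \<times> 'v) set" where
  "adj E = {(a, b). {a, b} \<in> E}"

definition graph_on :: "'v set \<Rightarrow> 'v set set \<Rightarrow> bool" where
  "graph_on V E \<longleftrightarrow> (\<forall>e\<in>E. \<exists>a b. a \<in> V \<and> b \<in> V \<and> a \<noteq> b \<and> e = {a, b})"

definition connected_on :: "'v set \<Rightarrow> 'v set set \<Rightarrow> bool" where
  "connected_on V E \<longleftrightarrow> (\<forall>a\<in>V. \<forall>b\<in>V. (a, b) \<in> (adj E)\<^sup>*)"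

definition is_tree :: "'v set \<Rightarrow> 'v set set \<Rightarrow> bool" where
  "is_tree V E \<longleftrightarrow> finite V \<and> V \<noteq> {} \<and> graph_on V E \<and> connected_on V E \<and> card E = card V - 1"

definition degree :: "'v set set \<Rightarrow> 'v \<Rightarrow> nat" where
  "degree E a = card {e \<in> E. a \<in> e}"

definition is_spanning_tree :: "'v set \<Rightarrow> 'v set set \<Rightarrow> 'v set set \<Rightarrow> bool" where
  "is_spanning_tree V Ef F \<longleftrightarrow> F \<subseteq> Ef \<and> is_tree V F"

definition is_MST :: "'v set \<Rightarrow> 'v set set \<Rightarrow> ('v set \<Rightarrow> real) \<Rightarrow> 'v set set \<Rightarrow> bool" where
  "is_MST V Ef w F \<longleftrightarrow> is_spanning_tree V Ef F \<and>
     (\<forall>F'. is_spanning_tree V Ef F' \<longrightarrow> (\<Sum>e\<in>F. w e) \<le> (\<Sum>e\<in>F'. w e))"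

definition red_laplacian :: "'v set \<Rightarrow> 'v \<Rightarrow> 'v set set \<Rightarrow> ('v set \<Rightarrow> real) \<Rightarrow> 'v \<Rightarrow> 'v \<Rightarrow> real" where
  "red_laplacian V rt E w a b =
     (if a \<in> V - {rt} \<and> b \<in> V - {rt} then
        (if a = b then (\<Sum>e\<in>{e \<in> E. a \<in> e}. 1 / w e)
         else if {a, b} \<in> E then - (1 / w {a, b}) else 0)
      else 0)"

definition inv_on :: "'v set \<Rightarrow> ('v \<Rightarrow> 'v \<Rightarrow> real) \<Rightarrow> 'v \<Rightarrow> 'v \<Rightarrow> real" where
  "inv_on V0 H = (THE G. (\<forall>a\<in>V0. \<forall>b\<in>V0. (\<Sum>c\<in>V0. H a c * G c b) = (if a = b then 1 else 0))
                      \<and> (\<forall>a b. a \<notin> V0 \<or> b \<notin> V0 \<longrightarrow> G a b = 0))"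

definition lcpf_voltage :: "'v set \<Rightarrow> 'v \<Rightarrow> 'v set set \<Rightarrow> ('v set \<Rightarrow> real) \<Rightarrow> ('v set \<Rightarrow> real)
    \<Rightarrow> real \<Rightarrow> ('v \<Rightarrow> 'w \<Rightarrow> real) \<Rightarrow> ('v \<Rightarrow> 'w \<Rightarrow> real) \<Rightarrow> 'v \<Rightarrow> 'w \<Rightarrow> real" where
  "lcpf_voltage V rt E r x v0 p q a \<omega> =
     (if a = rt then v0 else
        (\<Sum>d\<in>V - {rt}. inv_on (V - {rt}) (red_laplacian V rt E r) a d * p d \<omega>
                        + inv_on (V - {rt}) (red_laplacian V rt E x) a d * q d \<omega>))"

definition cov :: "'w measure \<Rightarrow> ('w \<Rightarrow> real) \<Rightarrow> ('w \<Rightarrow> real) \<Rightarrow> real" where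
  "cov M X Y = (\<integral>\<omega>. (X \<omega> - (\<integral>\<omega>'. X \<omega>' \<partial>M)) * (Y \<omega> - (\<integral>\<omega>'. Y \<omega>' \<partial>M)) \<partial>M)"

definition phi :: "'w measure \<Rightarrow> ('v \<Rightarrow> 'w \<Rightarrow> real) \<Rightarrow> 'v \<Rightarrow> 'v \<Rightarrow> real" where
  "phi M v a b = (\<integral>\<omega>. ((v a \<omega> - (\<integral>\<omega>'. v a \<omega>' \<partial>M)) - (v b \<omega> - (\<integral>\<omega>'. v b \<omega>' \<partial>M)))\<^sup>2 \<partial>M)"

definition k1 :: "'v set \<Rightarrow> 'v \<Rightarrow> 'v set set \<Rightarrow> ('v set \<Rightarrow> real) \<Rightarrow> ('v set \<Rightarrow> real)
    \<Rightarrow> 'w measure \<Rightarrow> ('v \<Rightarrow> 'w \<Rightarrow> real) \<Rightarrow> ('v \<Rightarrow> 'w \<Rightarrow> real) \<Rightarrow> real" where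
  "k1 V rt E r x M p q =
     min ((Min (r ` E))\<^sup>2) ((Min (x ` E))\<^sup>2) *
     Min ((\<lambda>d. cov M (p d) (p d) + cov M (q d) (q d) + 2 * cov M (p d) (q d)) ` (V - {rt}))"

end

theory Submission
  imports Defs
begin

text \<open>Root the tree at the substation. The inverse of the reduced Laplacian with edge weights
  \<open>1/\<rho>\<close> has \<open>(a, b)\<close> entry equal to the \<open>\<rho>\<close>-length of the common part of the root paths to
  \<open>a\<close> and \<open>b\<close>. Hence \<open>v a - v c\<close> is a combination of the centred injections at the nodes \<open>d\<close>,
  with coefficients (up to sign) the \<open>r\<close>- and \<open>x\<close>-lengths of the part of the \<open>a\<close>-\<open>c\<close> path lying on
  the root path of \<open>d\<close>; as injections at distinct nodes are uncorrelated, \<open>\<phi> a c\<close> is a sum over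
  \<open>d\<close> of quadratic forms with nonnegative coefficients in these lengths. If \<open>{a, c}\<close> is not an
  edge, its tree path contains any given edge on it and at least one further edge, which
  raises \<open>\<phi> a c\<close> above \<open>\<phi>\<close> of the given edge by at least \<open>k1\<close>. So with errors below \<open>k1/2\<close>
  every tree edge on the cycle closed by a non-tree edge is strictly lighter than that edge,
  and the cycle property makes the tree the unique minimum spanning tree.\<close>

lemma mem_adj_iff: "(a, b) \<in> adj G \<longleftrightarrow> {a, b} \<in> G"
  by (simp add: adj_def)

lemma adj_sym: "(a, b) \<in> adj G \<Longrightarrow> (b, a) \<in> adj G"
  by (simp add: adj_def insert_commute)

lemma adj_rtrancl_sym: "(a, b) \<in> (adj G)\<^sup>* \<Longrightarrow> (b, a) \<in> (adj G)\<^sup>*"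
proof (induction rule: rtrancl_induct)
  case base then show ?case by simp
next
  case (step y z)
  then show ?case using adj_sym by (meson converse_rtrancl_into_rtrancl)
qed

lemma adj_rtrancl_mono: "G \<subseteq> G' \<Longrightarrow> (a, b) \<in> (adj G)\<^sup>* \<Longrightarrow> (a, b) \<in> (adj G')\<^sup>*"
proof -
  assume "G \<subseteq> G'" "(a, b) \<in> (adj G)\<^sup>*"
  moreover have "adj G \<subseteq> adj G'" using \<open>G \<subseteq> G'\<close> by (auto simp: adj_def)
  ultimately show ?thesis using rtrancl_mono by blast
qed

lemma adj_rtrancl_remove_edge:
  assumes "(a, u) \<in> (adj F)\<^sup>*" "f = {a, b}"
  shows "(a, u) \<in> (adj (F - {f}))\<^sup>* \<or> (b, u) \<in> (adj (F - {f}))\<^sup>*"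
  using assms(1)
proof (induction rule: rtrancl_induct)
  case base then show ?case by simp
next
  case (step y z)
  show ?case
  proof (cases "{y, z} = f")
    case True
    then have "z = a \<or> z = b" using assms(2) by (auto simp: doubleton_eq_iff)
    then show ?thesis by auto
  next
    case False
    then have "(y, z) \<in> adj (F - {f})" using step(2) by (simp add: mem_adj_iff)
    then show ?thesis using step(3) by (auto intro: rtrancl.rtrancl_into_rtrancl)
  qed
qed

lemma graph_on_finite: "graph_on V G \<Longrightarrow> finite V \<Longrightarrow> finite G"
proof -
  assume g: "graph_on V G" and f: "finite V"
  have "G \<subseteq> Pow V" using g unfolding graph_on_def by auto
  then show "finite G" using f by (meson finite_Pow_iff finite_subset)
qed

definition hop_dist :: "'v set set \<Rightarrow> 'v \<Rightarrow> 'v \<Rightarrow> nat" where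
  "hop_dist G r0 v = (LEAST n. (r0, v) \<in> (adj G) ^^ n)"

definition hop_parent :: "'v set set \<Rightarrow> 'v \<Rightarrow> 'v \<Rightarrow> 'v" where
  "hop_parent G r0 v = (SOME u. {u, v} \<in> G \<and> hop_dist G r0 u + 1 = hop_dist G r0 v)"

lemma hop_dist_relpow: "(r0, v) \<in> (adj G)\<^sup>* \<Longrightarrow> (r0, v) \<in> (adj G) ^^ hop_dist G r0 v"
proof -
  assume "(r0, v) \<in> (adj G)\<^sup>*"
  then obtain n where "(r0, v) \<in> (adj G) ^^ n" using rtrancl_power by blast
  then show ?thesis unfolding hop_dist_def by (rule LeastI)
qed

lemma hop_dist_le: "(r0, v) \<in> (adj G) ^^ n \<Longrightarrow> hop_dist G r0 v \<le> n"
  unfolding hop_dist_def by (simp add: Least_le)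

lemma hop_dist_eq_0_iff: "(r0, v) \<in> (adj G)\<^sup>* \<Longrightarrow> hop_dist G r0 v = 0 \<longleftrightarrow> v = r0"
proof
  assume "(r0, v) \<in> (adj G)\<^sup>*" "hop_dist G r0 v = 0"
  then have "(r0, v) \<in> (adj G) ^^ 0" using hop_dist_relpow by metis
  then show "v = r0" by simp
next
  assume "v = r0"
  have "(r0, r0) \<in> (adj G) ^^ 0" by simp
  then have "hop_dist G r0 r0 \<le> 0" by (rule hop_dist_le)
  then show "hop_dist G r0 v = 0" using \<open>v = r0\<close> by simp
qed

lemma hop_dist_edge:
  assumes "(r0, u) \<in> (adj G)\<^sup>*" "{u, v} \<in> G"
  shows "hop_dist G r0 v \<le> hop_dist G r0 u + 1"
proof -
  have "(r0, u) \<in> (adj G) ^^ hop_dist G r0 u" using hop_dist_relpow assms(1) .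
  moreover have "(u, v) \<in> adj G" using assms(2) by (simp add: mem_adj_iff)
  ultimately have "(r0, v) \<in> (adj G) ^^ Suc (hop_dist G r0 u)" by auto
  then show ?thesis using hop_dist_le by fastforce
qed

lemma hop_parent_exists:
  assumes "(r0, v) \<in> (adj G)\<^sup>*" "v \<noteq> r0"
  shows "\<exists>u. {u, v} \<in> G \<and> hop_dist G r0 u + 1 = hop_dist G r0 v \<and> (r0, u) \<in> (adj G)\<^sup>*"
proof -
  have d: "hop_dist G r0 v \<noteq> 0" using hop_dist_eq_0_iff[OF assms(1)] assms(2) by simp
  then obtain k where k: "hop_dist G r0 v = Suc k" by (cases "hop_dist G r0 v") auto
  have "(r0, v) \<in> (adj G) ^^ Suc k" using hop_dist_relpow[OF assms(1)] k by simp
  then obtain u where u: "(r0, u) \<in> (adj G) ^^ k" "(u, v) \<in> adj G" by auto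
  have ru: "(r0, u) \<in> (adj G)\<^sup>*" using u(1) relpow_imp_rtrancl by blast
  have "hop_dist G r0 u \<le> k" using hop_dist_le u(1) .
  moreover have "hop_dist G r0 v \<le> hop_dist G r0 u + 1" using hop_dist_edge[OF ru] u(2) by (simp add: mem_adj_iff)
  ultimately have "hop_dist G r0 u + 1 = hop_dist G r0 v" using k by simp
  then show ?thesis using u(2) ru by (auto simp: mem_adj_iff)
qed

lemma hop_parent_edge_dist:
  assumes "(r0, v) \<in> (adj G)\<^sup>*" "v \<noteq> r0"
  shows "{hop_parent G r0 v, v} \<in> G" "hop_dist G r0 (hop_parent G r0 v) + 1 = hop_dist G r0 v"
proof -
  have "\<exists>u. {u, v} \<in> G \<and> hop_dist G r0 u + 1 = hop_dist G r0 v" using hop_parent_exists[OF assms] by blast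
  then have "{hop_parent G r0 v, v} \<in> G \<and> hop_dist G r0 (hop_parent G r0 v) + 1 = hop_dist G r0 v"
    unfolding hop_parent_def by (rule someI_ex)
  then show "{hop_parent G r0 v, v} \<in> G" "hop_dist G r0 (hop_parent G r0 v) + 1 = hop_dist G r0 v" by auto
qed

lemma hop_parent_edge_inj_on:
  assumes "connected_on V G" "r0 \<in> V"
  shows "inj_on (\<lambda>v. {hop_parent G r0 v, v}) (V - {r0})"
proof (rule inj_onI)
  fix v w assume v: "v \<in> V - {r0}" and w: "w \<in> V - {r0}" and eq: "{hop_parent G r0 v, v} = {hop_parent G r0 w, w}"
  have cv: "(r0, v) \<in> (adj G)\<^sup>*" "(r0, w) \<in> (adj G)\<^sup>*" using assms v w unfolding connected_on_def by auto
  have dv: "hop_dist G r0 (hop_parent G r0 v) + 1 = hop_dist G r0 v" using hop_parent_edge_dist(2)[OF cv(1)] v by auto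
  have dw: "hop_dist G r0 (hop_parent G r0 w) + 1 = hop_dist G r0 w" using hop_parent_edge_dist(2)[OF cv(2)] w by auto
  show "v = w"
  proof (rule ccontr)
    assume "v \<noteq> w"
    then have h: "v = hop_parent G r0 w \<and> w = hop_parent G r0 v" using eq by (auto simp: doubleton_eq_iff)
    then have "hop_dist G r0 w + 1 = hop_dist G r0 v" using dv by metis
    moreover have "hop_dist G r0 v + 1 = hop_dist G r0 w" using dw h by metis
    ultimately show False by simp
  qed
qed

lemma connected_card_edges_ge:
  assumes "graph_on V G" "connected_on V G" "finite V" "r0 \<in> V"
  shows "card V - 1 \<le> card G"
proof -
  have "(\<lambda>v. {hop_parent G r0 v, v}) ` (V - {r0}) \<subseteq> G"
  proof
    fix e assume "e \<in> (\<lambda>v. {hop_parent G r0 v, v}) ` (V - {r0})"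
    then obtain v where v: "v \<in> V - {r0}" "e = {hop_parent G r0 v, v}" by auto
    have "(r0, v) \<in> (adj G)\<^sup>*" using assms v unfolding connected_on_def by auto
    then show "e \<in> G" using hop_parent_edge_dist(1) v by auto
  qed
  then have "card (V - {r0}) \<le> card G"
    using card_inj_on_le[OF hop_parent_edge_inj_on[OF assms(2,4)]] graph_on_finite[OF assms(1,3)] by blast
  then show ?thesis using assms(3,4) by simp
qed

lemma tree_remove_edge_disconnects:
  assumes t: "is_tree V F" and f: "f \<in> F" "f = {a, b}"
  shows "(a, b) \<notin> (adj (F - {f}))\<^sup>*"
proof
  assume ab: "(a, b) \<in> (adj (F - {f}))\<^sup>*"
  have g: "graph_on V F" "connected_on V F" "finite V" "card F = card V - 1"
    using t unfolding is_tree_def by auto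
  obtain a' b' where ab': "a' \<in> V" "b' \<in> V" "a' \<noteq> b'" "f = {a', b'}" using g(1) f unfolding graph_on_def by blast
  have aV: "a \<in> V" "b \<in> V" "a \<noteq> b" using ab' f by (auto simp: doubleton_eq_iff)
  have g2: "graph_on V (F - {f})" using g(1) unfolding graph_on_def by auto
  have c2: "connected_on V (F - {f})"
    unfolding connected_on_def
  proof (intro ballI)
    fix u w assume u: "u \<in> V" and w: "w \<in> V"
    have "(a, u) \<in> (adj F)\<^sup>*" "(a, w) \<in> (adj F)\<^sup>*" using g(2) u w aV unfolding connected_on_def by auto
    then have au: "(a, u) \<in> (adj (F - {f}))\<^sup>*" and aw: "(a, w) \<in> (adj (F - {f}))\<^sup>*"
      using adj_rtrancl_remove_edge[OF _ f(2)] ab rtrancl_trans by metis+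
    show "(u, w) \<in> (adj (F - {f}))\<^sup>*" using adj_rtrancl_sym[OF au] aw by (rule rtrancl_trans)
  qed
  have "card V - 1 \<le> card (F - {f})" using connected_card_edges_ge[OF g2 c2 g(3) aV(1)] .
  moreover have "card (F - {f}) = card F - 1" using f graph_on_finite[OF g(1,3)] by simp
  moreover have "card V \<ge> 2"
  proof -
    have "{a, b} \<subseteq> V" using aV by auto
    then have "card {a, b} \<le> card V" using g(3) card_mono by blast
    then show ?thesis using aV by simp
  qed
  ultimately show False using g(4) by linarith
qed

lemma tree_exchange:
  assumes F: "is_tree V F" and f: "f \<in> F" "f = {a, c}"
    and y: "y1 \<in> V" "y2 \<in> V" "(a, y1) \<in> (adj (F - {f}))\<^sup>*" "(a, y2) \<notin> (adj (F - {f}))\<^sup>*"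
  shows "{y1, y2} \<notin> F - {f}" and "is_tree V (insert {y1, y2} (F - {f}))"
proof -
  let ?F' = "insert {y1, y2} (F - {f})"
  have g: "graph_on V F" "connected_on V F" "finite V" "card F = card V - 1"
    using F unfolding is_tree_def by auto
  have finF: "finite F" using graph_on_finite[OF g(1,3)] .
  have aV: "a \<in> V" using g(1) f unfolding graph_on_def by (auto simp: doubleton_eq_iff)
  show new: "{y1, y2} \<notin> F - {f}"
  proof
    assume "{y1, y2} \<in> F - {f}"
    then have "(y1, y2) \<in> adj (F - {f})" by (simp add: mem_adj_iff)
    then show False using y(3,4) by (meson rtrancl_into_rtrancl)
  qed
  have sub: "F - {f} \<subseteq> ?F'" by auto
  have reach: "(a, z) \<in> (adj (F - {f}))\<^sup>* \<or> (c, z) \<in> (adj (F - {f}))\<^sup>*" if "z \<in> V" for z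
  proof -
    have "(a, z) \<in> (adj F)\<^sup>*" using g(2) aV that unfolding connected_on_def by blast
    then show ?thesis using adj_rtrancl_remove_edge[OF _ f(2)] by blast
  qed
  have "(c, y2) \<in> (adj (F - {f}))\<^sup>*" using reach[OF y(2)] y(4) by blast
  then have "(y2, c) \<in> (adj ?F')\<^sup>*" by (rule adj_rtrancl_sym[OF adj_rtrancl_mono[OF sub]])
  moreover have "(a, y1) \<in> (adj ?F')\<^sup>*" using adj_rtrancl_mono[OF sub y(3)] .
  moreover have "(y1, y2) \<in> adj ?F'" by (simp add: mem_adj_iff)
  ultimately have ac: "(a, c) \<in> (adj ?F')\<^sup>*" by (meson rtrancl_into_rtrancl rtrancl_trans)
  have from_a: "(a, z) \<in> (adj ?F')\<^sup>*" if "z \<in> V" for z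
    using reach[OF that]
  proof
    assume "(a, z) \<in> (adj (F - {f}))\<^sup>*"
    then show ?thesis by (rule adj_rtrancl_mono[OF sub])
  next
    assume "(c, z) \<in> (adj (F - {f}))\<^sup>*"
    then show ?thesis using ac adj_rtrancl_mono[OF sub] by (meson rtrancl_trans)
  qed
  have conn: "connected_on V ?F'"
    unfolding connected_on_def using from_a adj_rtrancl_sym by (meson rtrancl_trans)
  have "y1 \<noteq> y2" using y(3,4) by auto
  then have graph: "graph_on V ?F'" using g(1) y(1,2) unfolding graph_on_def by auto
  have "card ?F' = Suc (card (F - {f}))" using new finF by simp
  also have "\<dots> = card F" using card_Suc_Diff1[OF finF f(1)] .
  finally have "card ?F' = card F" .
  then show "is_tree V ?F'" using F graph conn unfolding is_tree_def by auto
qed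

lemma inv_on_eqI:
  fixes H G :: "'a \<Rightarrow> 'a \<Rightarrow> real"
  assumes fin: "finite I"
    and right: "\<And>a b. a \<in> I \<Longrightarrow> b \<in> I \<Longrightarrow> (\<Sum>c\<in>I. H a c * G c b) = (if a = b then 1 else 0)"
    and left: "\<And>a b. a \<in> I \<Longrightarrow> b \<in> I \<Longrightarrow> (\<Sum>c\<in>I. G a c * H c b) = (if a = b then 1 else 0)"
    and outside: "\<And>a b. a \<notin> I \<or> b \<notin> I \<Longrightarrow> G a b = 0"
  shows "inv_on I H = G"
  unfolding inv_on_def
proof (rule the_equality)
  fix G' assume G': "(\<forall>a\<in>I. \<forall>b\<in>I. (\<Sum>c\<in>I. H a c * G' c b) = (if a = b then 1 else 0))
    \<and> (\<forall>a b. a \<notin> I \<or> b \<notin> I \<longrightarrow> G' a b = 0)"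
  show "G' = G"
  proof (intro ext)
    fix a b
    show "G' a b = G a b"
    proof (cases "a \<in> I \<and> b \<in> I")
      case False then show ?thesis using G' outside by auto
    next
      case True
      \<comment> \<open>A left inverse of \<open>H\<close> equals every right inverse: \<open>G' = (G H) G' = G (H G') = G\<close>.\<close>
      have "G' a b = (\<Sum>c\<in>I. if a = c then G' c b else 0)" using True fin by simp
      also have "\<dots> = (\<Sum>c\<in>I. (if a = c then 1 else 0) * G' c b)" by (rule sum.cong) auto
      also have "\<dots> = (\<Sum>c\<in>I. (\<Sum>d\<in>I. G a d * H d c) * G' c b)"
        using left True by simp
      also have "\<dots> = (\<Sum>d\<in>I. G a d * (\<Sum>c\<in>I. H d c * G' c b))"
        by (simp add: sum_distrib_left sum_distrib_right mult.assoc) (rule sum.swap)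
      also have "\<dots> = (\<Sum>d\<in>I. G a d * (if d = b then 1 else 0))"
        using G' True by simp
      also have "\<dots> = (\<Sum>d\<in>I. if d = b then G a d else 0)" by (rule sum.cong) auto
      also have "\<dots> = G a b" using True fin by simp
      finally show ?thesis .
    qed
  qed
qed (use right outside in blast)

definition quad_cov :: "real \<Rightarrow> real \<Rightarrow> real \<Rightarrow> real \<Rightarrow> real \<Rightarrow> real" where
  "quad_cov Vp Vq C a b = a\<^sup>2 * Vp + b\<^sup>2 * Vq + 2 * a * b * C"

lemma quad_cov_scale: "quad_cov Vp Vq C (s * a) (s * b) = s\<^sup>2 * quad_cov Vp Vq C a b"
  unfolding quad_cov_def by (simp add: power2_eq_square algebra_simps)

lemma quad_cov_mono:
  assumes "0 \<le> Vp" "0 \<le> Vq" "0 \<le> C" "0 \<le> R" "R \<le> R'" "0 \<le> X" "X \<le> X'"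
  shows "quad_cov Vp Vq C R X \<le> quad_cov Vp Vq C R' X'"
proof -
  have "R\<^sup>2 \<le> R'\<^sup>2" using assms by (simp add: power_mono)
  then have 1: "R\<^sup>2 * Vp \<le> R'\<^sup>2 * Vp" using assms by (simp add: mult_right_mono)
  have "X\<^sup>2 \<le> X'\<^sup>2" using assms by (simp add: power_mono)
  then have 2: "X\<^sup>2 * Vq \<le> X'\<^sup>2 * Vq" using assms by (simp add: mult_right_mono)
  have "R * X \<le> R' * X'" using assms by (meson mult_mono order_trans)
  then have "R * X * C \<le> R' * X' * C" using assms by (simp add: mult_right_mono)
  then have 3: "2 * R * X * C \<le> 2 * R' * X' * C" by simp
  show ?thesis unfolding quad_cov_def using 1 2 3 by linarith
qed

lemma quad_cov_add:
  assumes "0 \<le> Vp" "0 \<le> Vq" "0 \<le> C" "0 \<le> R" "0 \<le> X" "0 < mr" "mr \<le> r'" "0 < mx" "mx \<le> x'"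
    and "Vs \<le> Vp + Vq + 2 * C"
  shows "quad_cov Vp Vq C R X + min (mr\<^sup>2) (mx\<^sup>2) * Vs \<le> quad_cov Vp Vq C (R + r') (X + x')"
proof -
  let ?m = "min (mr\<^sup>2) (mx\<^sup>2)"
  have r'0: "0 \<le> r'" "0 \<le> x'" using assms by auto
  have eq: "quad_cov Vp Vq C (R + r') (X + x') = quad_cov Vp Vq C R X + quad_cov Vp Vq C r' x'
       + (2 * R * r' * Vp + 2 * X * x' * Vq + 2 * (R * x' + r' * X) * C)"
    unfolding quad_cov_def by (simp add: power2_eq_square algebra_simps)
  have extra: "0 \<le> 2 * R * r' * Vp + 2 * X * x' * Vq + 2 * (R * x' + r' * X) * C"
    using assms r'0 by (intro add_nonneg_nonneg mult_nonneg_nonneg) auto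
  have m1: "?m \<le> r'\<^sup>2"
  proof -
    have "mr\<^sup>2 \<le> r'\<^sup>2" using assms by (simp add: power_mono)
    then show ?thesis by simp
  qed
  have m2: "?m \<le> x'\<^sup>2"
  proof -
    have "mx\<^sup>2 \<le> x'\<^sup>2" using assms by (simp add: power_mono)
    then show ?thesis by simp
  qed
  have m3: "?m \<le> r' * x'"
  proof -
    have "mr * mx \<le> r' * x'" using assms by (simp add: mult_mono)
    moreover have "?m \<le> mr * mx"
    proof (cases "mr \<le> mx")
      case True
      then have "mr * mr \<le> mr * mx" using assms by (simp add: mult_left_mono)
      then show ?thesis by (simp add: power2_eq_square min_le_iff_disj)
    next
      case False
      then have "mx * mx \<le> mr * mx" using assms by (simp add: mult_right_mono)
      then show ?thesis by (simp add: power2_eq_square min_le_iff_disj)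
    qed
    ultimately show ?thesis by linarith
  qed
  have m0: "0 \<le> ?m" by simp
  have "?m * Vs \<le> ?m * (Vp + Vq + 2 * C)" using assms m0 by (simp add: mult_left_mono)
  also have "\<dots> = ?m * Vp + ?m * Vq + 2 * ?m * C" by (simp add: algebra_simps)
  also have "\<dots> \<le> r'\<^sup>2 * Vp + x'\<^sup>2 * Vq + 2 * (r' * x') * C"
    using m1 m2 m3 assms by (intro add_mono mult_right_mono) auto
  also have "\<dots> = quad_cov Vp Vq C r' x'" unfolding quad_cov_def by (simp add: mult.assoc)
  finally show ?thesis using eq extra by linarith
qed

lemma sum_mono_add_gap:
  fixes f g :: "'a \<Rightarrow> real"
  assumes "finite A" "i \<in> A" "\<And>j. j \<in> A \<Longrightarrow> f j \<le> g j" "f i + k \<le> g i"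
  shows "sum f A + k \<le> sum g A"
proof -
  have "sum f (A - {i}) \<le> sum g (A - {i})" using assms(3) by (intro sum_mono) auto
  then show ?thesis using assms(4) sum.remove[OF assms(1,2), of f] sum.remove[OF assms(1,2), of g] by linarith
qed

context prob_space begin

definition square_integrable :: "('a \<Rightarrow> real) \<Rightarrow> bool" where
  "square_integrable f \<longleftrightarrow> f \<in> borel_measurable M \<and> integrable M (\<lambda>\<omega>. (f \<omega>)\<^sup>2)"

lemma square_integrable_integrable: "square_integrable f \<Longrightarrow> integrable M f"
  unfolding square_integrable_def using square_integrable_imp_integrable by blast

lemma square_integrable_mult: "square_integrable f \<Longrightarrow> square_integrable g \<Longrightarrow> integrable M (\<lambda>\<omega>. f \<omega> * g \<omega>)"
proof -
  assume f: "square_integrable f" and g: "square_integrable g"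
  have i: "integrable M (\<lambda>\<omega>. (f \<omega>)\<^sup>2 + (g \<omega>)\<^sup>2)" using f g unfolding square_integrable_def by auto
  show ?thesis
  proof (rule Bochner_Integration.integrable_bound[OF i])
    show "(\<lambda>\<omega>. f \<omega> * g \<omega>) \<in> borel_measurable M" using f g unfolding square_integrable_def by auto
    show "AE \<omega> in M. norm (f \<omega> * g \<omega>) \<le> norm ((f \<omega>)\<^sup>2 + (g \<omega>)\<^sup>2)"
    proof (rule AE_I2)
      fix \<omega>
      have "2 * \<bar>f \<omega>\<bar> * \<bar>g \<omega>\<bar> \<le> (f \<omega>)\<^sup>2 + (g \<omega>)\<^sup>2"
        using sum_squares_bound[of "\<bar>f \<omega>\<bar>" "\<bar>g \<omega>\<bar>"] by simp
      moreover have "0 \<le> \<bar>f \<omega>\<bar> * \<bar>g \<omega>\<bar>" by simp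
      ultimately have "\<bar>f \<omega> * g \<omega>\<bar> \<le> (f \<omega>)\<^sup>2 + (g \<omega>)\<^sup>2" unfolding abs_mult by linarith
      then show "norm (f \<omega> * g \<omega>) \<le> norm ((f \<omega>)\<^sup>2 + (g \<omega>)\<^sup>2)" by simp
    qed
  qed
qed

lemma square_integrable_add: "square_integrable f \<Longrightarrow> square_integrable g \<Longrightarrow> square_integrable (\<lambda>\<omega>. f \<omega> + g \<omega>)"
proof -
  assume f: "square_integrable f" and g: "square_integrable g"
  have "integrable M (\<lambda>\<omega>. (f \<omega>)\<^sup>2 + 2 * (f \<omega> * g \<omega>) + (g \<omega>)\<^sup>2)"
    using f g square_integrable_mult[OF f g] unfolding square_integrable_def by auto
  moreover have "(\<lambda>\<omega>. (f \<omega> + g \<omega>)\<^sup>2) = (\<lambda>\<omega>. (f \<omega>)\<^sup>2 + 2 * (f \<omega> * g \<omega>) + (g \<omega>)\<^sup>2)"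
    by (auto simp: power2_eq_square algebra_simps)
  ultimately show ?thesis using f g unfolding square_integrable_def by auto
qed

lemma square_integrable_cmult: "square_integrable f \<Longrightarrow> square_integrable (\<lambda>\<omega>. c * f \<omega>)"
proof -
  assume f: "square_integrable f"
  have "(\<lambda>\<omega>. (c * f \<omega>)\<^sup>2) = (\<lambda>\<omega>. c\<^sup>2 * (f \<omega>)\<^sup>2)" by (simp add: power_mult_distrib)
  then show ?thesis using f unfolding square_integrable_def by auto
qed

lemma square_integrable_const: "square_integrable (\<lambda>\<omega>. c)"
  unfolding square_integrable_def by auto

lemma square_integrable_diff_const: "square_integrable f \<Longrightarrow> square_integrable (\<lambda>\<omega>. f \<omega> - c)"
  using square_integrable_add[OF _ square_integrable_const[of "- c"]] by simp

lemma integral_lincomb4: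
  fixes f1 f2 f3 f4 :: "'a \<Rightarrow> real"
  assumes "integrable M f1" "integrable M f2" "integrable M f3" "integrable M f4"
  shows "(\<integral>\<omega>. a1 * f1 \<omega> + a2 * f2 \<omega> + a3 * f3 \<omega> + a4 * f4 \<omega> \<partial>M)
       = a1 * (\<integral>\<omega>. f1 \<omega> \<partial>M) + a2 * (\<integral>\<omega>. f2 \<omega> \<partial>M) + a3 * (\<integral>\<omega>. f3 \<omega> \<partial>M) + a4 * (\<integral>\<omega>. f4 \<omega> \<partial>M)"
proof -
  have i: "integrable M (\<lambda>\<omega>. a1 * f1 \<omega>)" "integrable M (\<lambda>\<omega>. a2 * f2 \<omega>)"
    "integrable M (\<lambda>\<omega>. a3 * f3 \<omega>)" "integrable M (\<lambda>\<omega>. a4 * f4 \<omega>)" using assms by auto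
  have "(\<integral>\<omega>. a1 * f1 \<omega> + a2 * f2 \<omega> + a3 * f3 \<omega> + a4 * f4 \<omega> \<partial>M)
     = (\<integral>\<omega>. a1 * f1 \<omega> + a2 * f2 \<omega> + a3 * f3 \<omega> \<partial>M) + (\<integral>\<omega>. a4 * f4 \<omega> \<partial>M)"
    using i by (intro Bochner_Integration.integral_add) auto
  also have "(\<integral>\<omega>. a1 * f1 \<omega> + a2 * f2 \<omega> + a3 * f3 \<omega> \<partial>M)
     = (\<integral>\<omega>. a1 * f1 \<omega> + a2 * f2 \<omega> \<partial>M) + (\<integral>\<omega>. a3 * f3 \<omega> \<partial>M)"
    using i by (intro Bochner_Integration.integral_add) auto
  also have "(\<integral>\<omega>. a1 * f1 \<omega> + a2 * f2 \<omega> \<partial>M)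
     = (\<integral>\<omega>. a1 * f1 \<omega> \<partial>M) + (\<integral>\<omega>. a2 * f2 \<omega> \<partial>M)"
    using i by (intro Bochner_Integration.integral_add) auto
  finally show ?thesis by (simp add: integral_mult_right_zero)
qed

lemma cov_swap: "cov M f g = cov M g f"
  unfolding cov_def by (simp add: mult.commute)

lemma cov_sq_nonneg: "cov M f f \<ge> 0"
  unfolding cov_def by simp

lemma sum_lincomb_centered:
  assumes fin: "finite D" and L: "\<And>d. d \<in> D \<Longrightarrow> square_integrable (p d) \<and> square_integrable (q d)"
  shows "(\<Sum>d\<in>D. A d * p d \<omega> + B d * q d \<omega>) - (\<integral>\<omega>'. (\<Sum>d\<in>D. A d * p d \<omega>' + B d * q d \<omega>') \<partial>M)
     = (\<Sum>d\<in>D. A d * (p d \<omega> - (\<integral>\<omega>'. p d \<omega>' \<partial>M)) + B d * (q d \<omega> - (\<integral>\<omega>'. q d \<omega>' \<partial>M)))"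
proof -
  have "(\<integral>\<omega>'. (\<Sum>d\<in>D. A d * p d \<omega>' + B d * q d \<omega>') \<partial>M)
      = (\<Sum>d\<in>D. (\<integral>\<omega>'. A d * p d \<omega>' + B d * q d \<omega>' \<partial>M))"
    by (rule Bochner_Integration.integral_sum) (use L square_integrable_integrable in auto)
  also have "\<dots> = (\<Sum>d\<in>D. A d * (\<integral>\<omega>'. p d \<omega>' \<partial>M) + B d * (\<integral>\<omega>'. q d \<omega>' \<partial>M))"
    by (rule sum.cong) (use L square_integrable_integrable in auto)
  finally show ?thesis by (simp add: sum_subtractf[symmetric] algebra_simps)
qed

lemma integral_square_sum:
  assumes fin: "finite D" and L: "\<And>d. d \<in> D \<Longrightarrow> square_integrable (Y d)"
  shows "(\<integral>\<omega>. (\<Sum>d\<in>D. Y d \<omega>)\<^sup>2 \<partial>M) = (\<Sum>d\<in>D. \<Sum>d'\<in>D. (\<integral>\<omega>. Y d \<omega> * Y d' \<omega> \<partial>M))"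
proof -
  have "(\<integral>\<omega>. (\<Sum>d\<in>D. Y d \<omega>)\<^sup>2 \<partial>M) = (\<integral>\<omega>. (\<Sum>d\<in>D. \<Sum>d'\<in>D. Y d \<omega> * Y d' \<omega>) \<partial>M)"
    by (simp add: power2_eq_square sum_product)
  also have "\<dots> = (\<Sum>d\<in>D. (\<integral>\<omega>. (\<Sum>d'\<in>D. Y d \<omega> * Y d' \<omega>) \<partial>M))"
    by (rule Bochner_Integration.integral_sum) (use L square_integrable_mult in auto)
  also have "\<dots> = (\<Sum>d\<in>D. \<Sum>d'\<in>D. (\<integral>\<omega>. Y d \<omega> * Y d' \<omega> \<partial>M))"
    by (rule sum.cong[OF refl], rule Bochner_Integration.integral_sum) (use L square_integrable_mult in auto)
  finally show ?thesis .
qed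

lemma integral_centered_lincomb_mult:
  assumes "square_integrable f" "square_integrable g" "square_integrable f'" "square_integrable g'"
  shows "(\<integral>\<omega>. (a * (f \<omega> - expectation f) + b * (g \<omega> - expectation g))
              * (a' * (f' \<omega> - expectation f') + b' * (g' \<omega> - expectation g')) \<partial>M)
    = a * a' * cov M f f' + a * b' * cov M f g' + b * a' * cov M g f' + b * b' * cov M g g'"
proof -
  let ?c = "\<lambda>h \<omega>. h \<omega> - expectation h"
  have sq: "square_integrable (?c h)" if "square_integrable h" for h
    using square_integrable_diff_const[OF that] .
  have "(\<lambda>\<omega>. (a * ?c f \<omega> + b * ?c g \<omega>) * (a' * ?c f' \<omega> + b' * ?c g' \<omega>))
      = (\<lambda>\<omega>. (a * a') * (?c f \<omega> * ?c f' \<omega>) + (a * b') * (?c f \<omega> * ?c g' \<omega>)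
           + (b * a') * (?c g \<omega> * ?c f' \<omega>) + (b * b') * (?c g \<omega> * ?c g' \<omega>))"
    by (simp add: fun_eq_iff algebra_simps)
  then show ?thesis unfolding cov_def
    using integral_lincomb4[OF square_integrable_mult[OF sq sq, OF assms(1,3)]
        square_integrable_mult[OF sq sq, OF assms(1,4)] square_integrable_mult[OF sq sq, OF assms(2,3)]
        square_integrable_mult[OF sq sq, OF assms(2,4)]]
    by simp
qed

lemma second_moment_uncorrelated:
  assumes fin: "finite D" and L: "\<And>d. d \<in> D \<Longrightarrow> square_integrable (p d) \<and> square_integrable (q d)"
    and off: "\<And>d d'. d \<in> D \<Longrightarrow> d' \<in> D \<Longrightarrow> d \<noteq> d' \<Longrightarrow>
        cov M (p d) (p d') = 0 \<and> cov M (q d) (q d') = 0 \<and> cov M (q d) (p d') = 0"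
  shows "(\<integral>\<omega>. (\<Sum>d\<in>D. a d * (p d \<omega> - (\<integral>\<omega>'. p d \<omega>' \<partial>M)) + b d * (q d \<omega> - (\<integral>\<omega>'. q d \<omega>' \<partial>M)))\<^sup>2 \<partial>M)
    = (\<Sum>d\<in>D. quad_cov (cov M (p d) (p d)) (cov M (q d) (q d)) (cov M (p d) (q d)) (a d) (b d))"
proof -
  define Y where "Y d \<omega> = a d * (p d \<omega> - expectation (p d)) + b d * (q d \<omega> - expectation (q d))" for d \<omega>
  have LY: "square_integrable (Y d)" if "d \<in> D" for d
    unfolding Y_def using L[OF that]
    by (intro square_integrable_add square_integrable_cmult square_integrable_diff_const) auto
  have "(\<integral>\<omega>. (\<Sum>d\<in>D. Y d \<omega>)\<^sup>2 \<partial>M) = (\<Sum>d\<in>D. \<Sum>d'\<in>D. (\<integral>\<omega>. Y d \<omega> * Y d' \<omega> \<partial>M))"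
    by (rule integral_square_sum[OF fin LY])
  also have "\<dots> = (\<Sum>d\<in>D. \<Sum>d'\<in>D. if d = d'
      then quad_cov (cov M (p d) (p d)) (cov M (q d) (q d)) (cov M (p d) (q d)) (a d) (b d) else 0)"
  proof (rule sum.cong[OF refl], rule sum.cong[OF refl])
    fix d d' assume d: "d \<in> D" and d': "d' \<in> D"
    have YY: "(\<integral>\<omega>. Y d \<omega> * Y d' \<omega> \<partial>M) =
        a d * a d' * cov M (p d) (p d') + a d * b d' * cov M (p d) (q d')
        + b d * a d' * cov M (q d) (p d') + b d * b d' * cov M (q d) (q d')"
      unfolding Y_def using L[OF d] L[OF d'] by (intro integral_centered_lincomb_mult) auto
    show "(\<integral>\<omega>. Y d \<omega> * Y d' \<omega> \<partial>M) = (if d = d'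
        then quad_cov (cov M (p d) (p d)) (cov M (q d) (q d)) (cov M (p d) (q d)) (a d) (b d) else 0)"
    proof (cases "d = d'")
      case True
      then show ?thesis using YY cov_swap[of "q d" "p d"]
        by (simp add: quad_cov_def power2_eq_square algebra_simps)
    next
      case False
      have "cov M (p d) (q d') = 0" using off[OF d' d] False cov_swap by metis
      then show ?thesis using YY off[OF d d' False] False by simp
    qed
  qed
  also have "\<dots> = (\<Sum>d\<in>D. quad_cov (cov M (p d) (p d)) (cov M (q d) (q d)) (cov M (p d) (q d)) (a d) (b d))"
    using fin by simp
  finally show ?thesis unfolding Y_def .
qed

end

locale rooted_tree =
  fixes V :: "'v set" and E :: "'v set set" and rt :: 'v
  assumes tree: "is_tree V E" and rtV: "rt \<in> V"
begin

definition depth :: "'v \<Rightarrow> nat" where "depth v = hop_dist E rt v"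
definition parent :: "'v \<Rightarrow> 'v" where "parent v = (if v = rt then rt else hop_parent E rt v)"
definition up_edge :: "'v \<Rightarrow> 'v set" where "up_edge v = {parent v, v}"
definition ancestor :: "'v \<Rightarrow> 'v \<Rightarrow> bool" where "ancestor u v \<longleftrightarrow> (\<exists>k. (parent ^^ k) v = u)"

lemma finite_V: "finite V" and graph_on_E: "graph_on V E" and connected_on_E: "connected_on V E"
  and card_E: "card E = card V - 1"
  using tree unfolding is_tree_def by auto

lemma finite_E: "finite E" using graph_on_finite[OF graph_on_E finite_V] .

lemma root_reaches: "v \<in> V \<Longrightarrow> (rt, v) \<in> (adj E)\<^sup>*"
  using connected_on_E rtV unfolding connected_on_def by auto

lemma edge_endpoints: "{a, b} \<in> E \<Longrightarrow> a \<in> V \<and> b \<in> V \<and> a \<noteq> b"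
  using graph_on_E unfolding graph_on_def by (auto simp: doubleton_eq_iff)

lemma parent_root [simp]: "parent rt = rt" by (simp add: parent_def)

lemma up_edge_in_E: "v \<in> V - {rt} \<Longrightarrow> up_edge v \<in> E"
  unfolding up_edge_def parent_def using hop_parent_edge_dist(1)[OF root_reaches] by auto

lemma depth_parent: "v \<in> V - {rt} \<Longrightarrow> depth (parent v) + 1 = depth v"
  unfolding depth_def parent_def using hop_parent_edge_dist(2)[OF root_reaches] by auto

lemma parent_in_V: "v \<in> V \<Longrightarrow> parent v \<in> V"
  using up_edge_in_E edge_endpoints unfolding up_edge_def by (cases "v = rt") auto

lemma depth_eq_0_iff: "v \<in> V \<Longrightarrow> depth v = 0 \<longleftrightarrow> v = rt"
  unfolding depth_def using hop_dist_eq_0_iff[OF root_reaches] by simp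

lemma depth_parent_eq: "v \<in> V \<Longrightarrow> depth (parent v) = depth v - 1"
  using depth_parent depth_eq_0_iff by (cases "v = rt") force+

lemma parent_neq: "v \<in> V - {rt} \<Longrightarrow> parent v \<noteq> v"
  using depth_parent by force

lemma up_edge_inj_on: "inj_on up_edge (V - {rt})"
proof -
  have "inj_on (\<lambda>v. {hop_parent E rt v, v}) (V - {rt})" using hop_parent_edge_inj_on[OF connected_on_E rtV] .
  moreover have "\<And>v. v \<in> V - {rt} \<Longrightarrow> up_edge v = {hop_parent E rt v, v}" unfolding up_edge_def parent_def by auto
  ultimately show ?thesis by (simp add: inj_on_def)
qed

lemma up_edge_image: "up_edge ` (V - {rt}) = E"
proof -
  have sub: "up_edge ` (V - {rt}) \<subseteq> E" using up_edge_in_E by auto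
  have "card (up_edge ` (V - {rt})) = card (V - {rt})" using card_image[OF up_edge_inj_on] .
  also have "\<dots> = card E" using card_E finite_V rtV by simp
  finally show ?thesis using card_subset_eq[OF finite_E sub] by simp
qed

lemma edge_is_up_edge: "e \<in> E \<Longrightarrow> \<exists>w \<in> V - {rt}. e = up_edge w"
  using up_edge_image by auto

lemma parent_funpow_in_V: "v \<in> V \<Longrightarrow> (parent ^^ k) v \<in> V"
  by (induction k) (auto simp: parent_in_V)

lemma depth_parent_funpow: "v \<in> V \<Longrightarrow> depth ((parent ^^ k) v) = depth v - k"
proof (induction k)
  case 0 then show ?case by simp
next
  case (Suc k)
  then show ?case using depth_parent_eq[OF parent_funpow_in_V[OF Suc(2), of k]] by simp
qed

lemma parent_funpow_root: "(parent ^^ k) rt = rt"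
  by (induction k) auto

lemma ancestor_refl: "ancestor v v" unfolding ancestor_def by (metis funpow_0)

lemma ancestor_in_V: "ancestor u v \<Longrightarrow> v \<in> V \<Longrightarrow> u \<in> V"
  unfolding ancestor_def using parent_funpow_in_V by blast

lemma ancestor_depth_le: "ancestor u v \<Longrightarrow> v \<in> V \<Longrightarrow> depth u \<le> depth v"
  unfolding ancestor_def using depth_parent_funpow by auto

lemma ancestor_depth_eq: "ancestor u v \<Longrightarrow> v \<in> V \<Longrightarrow> depth u = depth v \<Longrightarrow> u = v"
proof -
  assume a: "ancestor u v" "v \<in> V" "depth u = depth v"
  then obtain k where k: "(parent ^^ k) v = u" unfolding ancestor_def by blast
  show "u = v"
  proof (cases "k = 0")
    case True then show ?thesis using k by simp
  next
    case False
    then have "depth v = 0" using depth_parent_funpow[OF a(2), of k] k a(3) by simp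
    then have "v = rt" using depth_eq_0_iff a(2) by simp
    then show ?thesis using k parent_funpow_root by simp
  qed
qed

lemma ancestor_antisym: "ancestor u v \<Longrightarrow> ancestor v u \<Longrightarrow> v \<in> V \<Longrightarrow> u = v"
  using ancestor_depth_eq ancestor_depth_le ancestor_in_V by (meson le_antisym)

lemma ancestor_trans: "ancestor u v \<Longrightarrow> ancestor v w \<Longrightarrow> ancestor u w"
  unfolding ancestor_def by (metis funpow_add o_apply)

lemma ancestor_root: "ancestor w rt \<Longrightarrow> w = rt"
  unfolding ancestor_def using parent_funpow_root by auto

lemma ancestor_parent: "ancestor (parent v) v"
  unfolding ancestor_def by (metis funpow_0 funpow_Suc_right o_apply)

lemma ancestor_iff_parent: "v \<in> V - {rt} \<Longrightarrow> ancestor w v \<longleftrightarrow> w = v \<or> ancestor w (parent v)"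
proof
  assume v: "v \<in> V - {rt}" and "ancestor w v"
  then obtain k where k: "(parent ^^ k) v = w" unfolding ancestor_def by blast
  show "w = v \<or> ancestor w (parent v)"
  proof (cases k)
    case 0 then show ?thesis using k by simp
  next
    case (Suc j)
    then have "(parent ^^ j) (parent v) = w" using k by (metis funpow_Suc_right o_apply)
    then show ?thesis unfolding ancestor_def by blast
  qed
next
  assume "w = v \<or> ancestor w (parent v)"
  then show "ancestor w v" using ancestor_refl ancestor_parent ancestor_trans by blast
qed

lemma ancestors_linear: "ancestor u d \<Longrightarrow> ancestor u' d \<Longrightarrow> ancestor u u' \<or> ancestor u' u"
proof -
  assume "ancestor u d" "ancestor u' d"
  then obtain k k' where k: "(parent ^^ k) d = u" and k': "(parent ^^ k') d = u'" unfolding ancestor_def by blast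
  show ?thesis
  proof (cases "k \<le> k'")
    case True
    then have "(parent ^^ (k' - k)) u = u'" using k k' by (metis funpow_add le_add_diff_inverse2 o_apply)
    then show ?thesis unfolding ancestor_def by blast
  next
    case False
    then have "(parent ^^ (k - k')) u' = u" using k k' by (metis funpow_add le_add_diff_inverse2 nat_le_linear o_apply)
    then show ?thesis unfolding ancestor_def by blast
  qed
qed

lemma ancestor_child: "ancestor a b \<Longrightarrow> a \<noteq> b \<Longrightarrow> a \<noteq> rt \<Longrightarrow> b \<in> V \<Longrightarrow> \<exists>c. c \<in> V - {rt} \<and> parent c = a \<and> ancestor c b"
proof -
  assume a: "ancestor a b" "a \<noteq> b" "a \<noteq> rt" "b \<in> V"
  then obtain k where k: "(parent ^^ k) b = a" unfolding ancestor_def by blast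
  then obtain j where j: "k = Suc j" using a(2) by (cases k) auto
  let ?c = "(parent ^^ j) b"
  have "parent ?c = a" using k j by simp
  moreover have "?c \<noteq> rt" using \<open>parent ?c = a\<close> a(3) by auto
  moreover have "?c \<in> V" using parent_funpow_in_V a(4) by blast
  moreover have "ancestor ?c b" unfolding ancestor_def by blast
  ultimately show ?thesis by blast
qed

lemma not_ancestor_parent: "v \<in> V - {rt} \<Longrightarrow> \<not> ancestor v (parent v)"
  using ancestor_depth_le depth_parent parent_in_V by fastforce

lemma mem_up_edge_iff: "w \<in> V - {rt} \<Longrightarrow> a \<in> up_edge w \<longleftrightarrow> a = w \<or> a = parent w"
  unfolding up_edge_def by auto

definition children :: "'v \<Rightarrow> 'v set" where "children a = {c \<in> V - {rt}. parent c = a}"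

definition common_path_weight :: "('v set \<Rightarrow> real) \<Rightarrow> 'v \<Rightarrow> 'v \<Rightarrow> real" where
  "common_path_weight \<rho> a b = (\<Sum>w \<in> {w \<in> V - {rt}. ancestor w a \<and> ancestor w b}. \<rho> (up_edge w))"

lemma finite_children: "finite (children a)" unfolding children_def using finite_V by auto

lemma common_path_weight_root: "common_path_weight \<rho> rt b = 0"
proof -
  have e: "{w \<in> V - {rt}. ancestor w rt \<and> ancestor w b} = {}" using ancestor_root by auto
  show ?thesis unfolding common_path_weight_def e by simp
qed

lemma common_path_weight_sym: "common_path_weight \<rho> a b = common_path_weight \<rho> b a"
  unfolding common_path_weight_def by (simp add: conj_commute)

lemma common_path_weight_parent:
  assumes a: "a \<in> V - {rt}"
  shows "common_path_weight \<rho> a b = common_path_weight \<rho> (parent a) b + (if ancestor a b then \<rho> (up_edge a) else 0)"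
proof -
  let ?S = "{w \<in> V - {rt}. ancestor w (parent a) \<and> ancestor w b}"
  have fin: "finite ?S" using finite_V by auto
  have notin: "a \<notin> ?S" using not_ancestor_parent[OF a] by auto
  have eq: "{w \<in> V - {rt}. ancestor w a \<and> ancestor w b} = (if ancestor a b then insert a ?S else ?S)"
    using ancestor_iff_parent[OF a] a by auto
  show ?thesis unfolding common_path_weight_def eq using fin notin by auto
qed

lemma edge_iff_parent_or_child:
  assumes a: "a \<in> V - {rt}" and c: "c \<noteq> a"
  shows "{a, c} \<in> E \<longleftrightarrow> c = parent a \<or> c \<in> children a"
proof
  assume "{a, c} \<in> E"
  then obtain w where w: "w \<in> V - {rt}" "{a, c} = up_edge w" using edge_is_up_edge by blast
  then have "(a = w \<and> c = parent w) \<or> (a = parent w \<and> c = w)" using c unfolding up_edge_def by (auto simp: doubleton_eq_iff)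
  then show "c = parent a \<or> c \<in> children a" using w unfolding children_def by auto
next
  assume "c = parent a \<or> c \<in> children a"
  then show "{a, c} \<in> E"
  proof
    assume "c = parent a" then show ?thesis using up_edge_in_E[OF a] unfolding up_edge_def by (simp add: insert_commute)
  next
    assume "c \<in> children a" then show ?thesis using up_edge_in_E[of c] unfolding up_edge_def children_def by auto
  qed
qed

lemma parent_notin_children: "a \<in> V - {rt} \<Longrightarrow> parent a \<notin> children a"
proof
  assume a: "a \<in> V - {rt}" and "parent a \<in> children a"
  then have p: "parent a \<in> V - {rt}" "parent (parent a) = a" unfolding children_def by auto
  have "depth (parent (parent a)) + 1 = depth (parent a)" using depth_parent[OF p(1)] .
  moreover have "depth (parent a) + 1 = depth a" using depth_parent[OF a] .
  ultimately show False using p(2) by simp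
qed

lemma notin_children_self: "a \<in> V - {rt} \<Longrightarrow> a \<notin> children a"
  unfolding children_def using parent_neq by force

lemma incident_edges_eq:
  assumes a: "a \<in> V - {rt}"
  shows "{e \<in> E. a \<in> e} = up_edge ` (insert a (children a))"
proof
  show "{e \<in> E. a \<in> e} \<subseteq> up_edge ` insert a (children a)"
  proof
    fix e assume "e \<in> {e \<in> E. a \<in> e}"
    then obtain w where w: "w \<in> V - {rt}" "e = up_edge w" "a \<in> e" using edge_is_up_edge by blast
    then have "a = w \<or> a = parent w" using mem_up_edge_iff by blast
    then show "e \<in> up_edge ` insert a (children a)" using w unfolding children_def by auto
  qed
next
  show "up_edge ` insert a (children a) \<subseteq> {e \<in> E. a \<in> e}"
    using up_edge_in_E a unfolding children_def up_edge_def by auto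
qed

lemma sum_incident_edges:
  assumes a: "a \<in> V - {rt}"
  shows "(\<Sum>e\<in>{e \<in> E. a \<in> e}. f e) = f (up_edge a) + (\<Sum>c\<in>children a. f (up_edge c))"
proof -
  have inj: "inj_on up_edge (insert a (children a))"
    by (rule inj_on_subset[OF up_edge_inj_on]) (use a in \<open>auto simp: children_def\<close>)
  have "(\<Sum>e\<in>{e \<in> E. a \<in> e}. f e) = (\<Sum>c\<in>insert a (children a). f (up_edge c))"
    unfolding incident_edges_eq[OF a] using sum.reindex[OF inj] by simp
  also have "\<dots> = f (up_edge a) + (\<Sum>c\<in>children a. f (up_edge c))"
    using finite_children notin_children_self[OF a] by simp
  finally show ?thesis .
qed

lemma ancestor_count_children:
  assumes a: "a \<in> V - {rt}" and b: "b \<in> V"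
  shows "(if ancestor a b then 1 else 0) - (\<Sum>c\<in>children a. (if ancestor c b then 1 else 0)) = (if a = b then 1 else (0::real))"
proof -
  have s: "(\<Sum>c\<in>children a. (if ancestor c b then 1 else (0::real))) = real (card {c \<in> children a. ancestor c b})"
  proof -
    have "children a \<inter> {c. ancestor c b} = {c \<in> children a. ancestor c b}" by auto
    then show ?thesis using finite_children by (simp add: sum.If_cases)
  qed
  show ?thesis
  proof (cases "a = b")
    case True
    have "{c \<in> children a. ancestor c b} = {}"
    proof -
      have "\<not> ancestor c a" if "c \<in> children a" for c
      proof
        assume "ancestor c a"
        then have "depth c \<le> depth a" using ancestor_depth_le a by auto
        moreover have "depth a + 1 = depth c" using depth_parent that unfolding children_def by force
        ultimately show False by simp
      qed
      then show ?thesis using True by auto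
    qed
    then show ?thesis using s True ancestor_refl by simp
  next
    case False
    show ?thesis
    proof (cases "ancestor a b")
      case True
      obtain c where c: "c \<in> V - {rt}" "parent c = a" "ancestor c b" using ancestor_child[OF True False _ b] a by blast
      have "{c \<in> children a. ancestor c b} = {c}"
      proof (rule set_eqI, rule iffI)
        fix c' assume "c' \<in> {c \<in> children a. ancestor c b}"
        then have c': "c' \<in> V - {rt}" "parent c' = a" "ancestor c' b" unfolding children_def by auto
        have d: "depth c = depth c'" using depth_parent[OF c(1)] depth_parent[OF c'(1)] c(2) c'(2) by simp
        from ancestors_linear[OF c(3) c'(3)] show "c' \<in> {c}"
          using ancestor_depth_eq d c(1) c'(1) by auto
      next
        fix c' assume "c' \<in> {c}" then show "c' \<in> {c \<in> children a. ancestor c b}" using c unfolding children_def by auto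
      qed
      then show ?thesis using s True False by simp
    next
      case na: False
      have "{c \<in> children a. ancestor c b} = {}"
        using na ancestor_parent ancestor_trans unfolding children_def by blast
      then show ?thesis using s na False by simp
    qed
  qed
qed

lemma red_laplacian_mult:
  assumes a: "a \<in> V - {rt}" and f_rt: "f rt = 0"
  shows "(\<Sum>c\<in>V - {rt}. red_laplacian V rt E \<rho> a c * f c) =
    (f a - f (parent a)) / \<rho> (up_edge a) + (\<Sum>c\<in>children a. (f a - f c) / \<rho> (up_edge c))"
proof -
  let ?H = "red_laplacian V rt E \<rho>"
  let ?g = "\<lambda>c. if {a, c} \<in> E then - (1 / \<rho> {a, c}) * f c else 0"
  have fin: "finite (V - {rt})" using finite_V by auto
  have "(\<Sum>c\<in>V - {rt}. ?H a c * f c) = ?H a a * f a + (\<Sum>c\<in>V - {rt} - {a}. ?H a c * f c)"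
    using sum.remove[OF fin a] by simp
  also have "(\<Sum>c\<in>V - {rt} - {a}. ?H a c * f c) = (\<Sum>c\<in>V - {rt} - {a}. ?g c)"
    by (rule sum.cong) (use a in \<open>auto simp: red_laplacian_def\<close>)
  also have "\<dots> = (\<Sum>c\<in>V - {a}. ?g c)"
    by (rule sum.mono_neutral_left) (use finite_V f_rt in auto)
  also have "\<dots> = (\<Sum>c\<in>insert (parent a) (children a). ?g c)"
  proof (rule sum.mono_neutral_right)
    show "finite (V - {a})" using finite_V by auto
    show "insert (parent a) (children a) \<subseteq> V - {a}"
      using parent_in_V a parent_neq[OF a] notin_children_self[OF a] unfolding children_def by auto
    show "\<forall>i\<in>V - {a} - insert (parent a) (children a). ?g i = 0" using edge_iff_parent_or_child[OF a] by auto
  qed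
  also have "\<dots> = ?g (parent a) + (\<Sum>c\<in>children a. ?g c)"
    using finite_children parent_notin_children[OF a] by simp
  also have "?g (parent a) = - (1 / \<rho> (up_edge a)) * f (parent a)"
    using edge_iff_parent_or_child[OF a, of "parent a"] parent_neq[OF a] unfolding up_edge_def by (auto simp: insert_commute)
  also have "(\<Sum>c\<in>children a. ?g c) = (\<Sum>c\<in>children a. - (1 / \<rho> (up_edge c)) * f c)"
  proof (rule sum.cong)
    fix c assume c: "c \<in> children a"
    then have "{a, c} \<in> E" using edge_iff_parent_or_child[OF a, of c] notin_children_self[OF a] by auto
    moreover have "{a, c} = up_edge c" using c unfolding children_def up_edge_def by auto
    ultimately show "?g c = - (1 / \<rho> (up_edge c)) * f c" by simp
  qed simp
  also have "?H a a = 1 / \<rho> (up_edge a) + (\<Sum>c\<in>children a. 1 / \<rho> (up_edge c))"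
    using sum_incident_edges[OF a] a unfolding red_laplacian_def by simp
  finally show ?thesis
    by (simp add: diff_divide_distrib sum_subtractf sum_distrib_left sum_negf algebra_simps)
qed

lemma red_laplacian_common_path_weight:
  assumes a: "a \<in> V - {rt}" and b: "b \<in> V - {rt}" and pos: "\<forall>e\<in>E. \<rho> e > 0"
  shows "(\<Sum>c\<in>V - {rt}. red_laplacian V rt E \<rho> a c * common_path_weight \<rho> c b) = (if a = b then 1 else 0)"
proof -
  have up_pos: "\<rho> (up_edge c) > 0" if "c \<in> V - {rt}" for c using pos up_edge_in_E[OF that] by auto
  have "(\<Sum>c\<in>V - {rt}. red_laplacian V rt E \<rho> a c * common_path_weight \<rho> c b) =
      (common_path_weight \<rho> a b - common_path_weight \<rho> (parent a) b) / \<rho> (up_edge a)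
      + (\<Sum>c\<in>children a. (common_path_weight \<rho> a b - common_path_weight \<rho> c b) / \<rho> (up_edge c))"
    by (rule red_laplacian_mult[OF a, where f = "\<lambda>c. common_path_weight \<rho> c b"])
      (rule common_path_weight_root)
  also have "(common_path_weight \<rho> a b - common_path_weight \<rho> (parent a) b) / \<rho> (up_edge a)
      = (if ancestor a b then 1 else 0)"
    using common_path_weight_parent[OF a, of \<rho> b] up_pos[OF a] by simp
  also have "(\<Sum>c\<in>children a. (common_path_weight \<rho> a b - common_path_weight \<rho> c b) / \<rho> (up_edge c))
      = - (\<Sum>c\<in>children a. if ancestor c b then 1 else 0)"
    unfolding sum_negf[symmetric]
  proof (rule sum.cong[OF refl])
    fix c assume "c \<in> children a"
    then have c: "c \<in> V - {rt}" "parent c = a" unfolding children_def by auto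
    then show "(common_path_weight \<rho> a b - common_path_weight \<rho> c b) / \<rho> (up_edge c)
        = - (if ancestor c b then 1 else 0)"
      using common_path_weight_parent[OF c(1), of \<rho> b] up_pos[OF c(1)] by simp
  qed
  finally show ?thesis using ancestor_count_children[OF a] b by simp
qed

definition common_path_matrix :: "('v set \<Rightarrow> real) \<Rightarrow> 'v \<Rightarrow> 'v \<Rightarrow> real" where
  "common_path_matrix \<rho> a b = (if a \<in> V - {rt} \<and> b \<in> V - {rt} then common_path_weight \<rho> a b else 0)"

lemma red_laplacian_sym: "red_laplacian V rt E \<rho> a b = red_laplacian V rt E \<rho> b a"
  unfolding red_laplacian_def by (auto simp: insert_commute)

lemma inv_on_red_laplacian:
  assumes pos: "\<forall>e\<in>E. \<rho> e > 0"
  shows "inv_on (V - {rt}) (red_laplacian V rt E \<rho>) = common_path_matrix \<rho>"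
proof -
  let ?H = "red_laplacian V rt E \<rho>"
  have right: "(\<Sum>c\<in>V - {rt}. ?H a c * common_path_matrix \<rho> c b) = (if a = b then 1 else 0)"
    if "a \<in> V - {rt}" "b \<in> V - {rt}" for a b
  proof -
    have "(\<Sum>c\<in>V - {rt}. ?H a c * common_path_matrix \<rho> c b)
        = (\<Sum>c\<in>V - {rt}. ?H a c * common_path_weight \<rho> c b)"
      by (rule sum.cong) (use that in \<open>auto simp: common_path_matrix_def\<close>)
    then show ?thesis using red_laplacian_common_path_weight[OF that pos] by simp
  qed
  have left: "(\<Sum>c\<in>V - {rt}. common_path_matrix \<rho> a c * ?H c b) = (if a = b then 1 else 0)"
    if "a \<in> V - {rt}" "b \<in> V - {rt}" for a b
  proof -
    have "(\<Sum>c\<in>V - {rt}. common_path_matrix \<rho> a c * ?H c b)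
        = (\<Sum>c\<in>V - {rt}. ?H b c * common_path_matrix \<rho> c a)"
      by (rule sum.cong) (auto simp: common_path_matrix_def common_path_weight_sym red_laplacian_sym)
    then show ?thesis using right[OF that(2,1)] by auto
  qed
  have "finite (V - {rt})" using finite_V by simp
  then show ?thesis by (rule inv_on_eqI[OF _ right left]) (auto simp: common_path_matrix_def)
qed

text \<open>\<open>up_edge w\<close> lies on the tree path between \<open>a\<close> and \<open>c\<close> iff \<open>w\<close> is an ancestor of exactly
  one of them.\<close>
definition path_overlap_weight :: "('v set \<Rightarrow> real) \<Rightarrow> 'v \<Rightarrow> 'v \<Rightarrow> 'v \<Rightarrow> real" where
  "path_overlap_weight \<rho> a c d = (\<Sum>w \<in> {w \<in> V - {rt}. ancestor w d \<and> ancestor w a \<noteq> ancestor w c}. \<rho> (up_edge w))"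

lemma ancestor_sign_cases:
  "(\<forall>w \<in> V - {rt}. ancestor w d \<longrightarrow> ancestor w c \<longrightarrow> ancestor w a) \<or> (\<forall>w \<in> V - {rt}. ancestor w d \<longrightarrow> ancestor w a \<longrightarrow> ancestor w c)"
proof (rule ccontr)
  assume "\<not> ?thesis"
  then obtain w1 w2 where w1: "ancestor w1 d" "ancestor w1 c" "\<not> ancestor w1 a" and w2: "ancestor w2 d" "ancestor w2 a" "\<not> ancestor w2 c"
    by blast
  from ancestors_linear[OF w1(1) w2(1)] show False using w1 w2 ancestor_trans by blast
qed

lemma common_path_weight_conv: "common_path_weight \<rho> a d = (\<Sum>w \<in> {w \<in> V - {rt}. ancestor w d}. if ancestor w a then \<rho> (up_edge w) else 0)"
proof -
  have fin: "finite {w \<in> V - {rt}. ancestor w d}" using finite_V by auto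
  have "{w \<in> V - {rt}. ancestor w a \<and> ancestor w d} = {w \<in> {w \<in> V - {rt}. ancestor w d}. ancestor w a}" by auto
  then show ?thesis unfolding common_path_weight_def using sum.inter_filter[OF fin, of "\<lambda>w. \<rho> (up_edge w)" "\<lambda>w. ancestor w a"] by simp
qed

lemma path_overlap_weight_conv: "path_overlap_weight \<rho> a c d = (\<Sum>w \<in> {w \<in> V - {rt}. ancestor w d}. if ancestor w a \<noteq> ancestor w c then \<rho> (up_edge w) else 0)"
proof -
  have fin: "finite {w \<in> V - {rt}. ancestor w d}" using finite_V by auto
  have "{w \<in> V - {rt}. ancestor w d \<and> ancestor w a \<noteq> ancestor w c} = {w \<in> {w \<in> V - {rt}. ancestor w d}. ancestor w a \<noteq> ancestor w c}" by auto
  then show ?thesis unfolding path_overlap_weight_def using sum.inter_filter[OF fin, of "\<lambda>w. \<rho> (up_edge w)" "\<lambda>w. ancestor w a \<noteq> ancestor w c"] by simp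
qed

lemma common_path_weight_diff:
  "\<exists>s::real. (s = 1 \<or> s = -1) \<and> (\<forall>\<rho>. common_path_weight \<rho> a d - common_path_weight \<rho> c d = s * path_overlap_weight \<rho> a c d)"
proof -
  let ?T = "{w \<in> V - {rt}. ancestor w d}"
  have diff: "common_path_weight \<rho> a d - common_path_weight \<rho> c d = (\<Sum>w \<in> ?T. (if ancestor w a then \<rho> (up_edge w) else 0) - (if ancestor w c then \<rho> (up_edge w) else 0))" for \<rho>
    unfolding common_path_weight_conv by (simp add: sum_subtractf)
  from ancestor_sign_cases[of d c a] show ?thesis
  proof
    assume h: "\<forall>w \<in> V - {rt}. ancestor w d \<longrightarrow> ancestor w c \<longrightarrow> ancestor w a"
    have "common_path_weight \<rho> a d - common_path_weight \<rho> c d = 1 * path_overlap_weight \<rho> a c d" for \<rho>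
      unfolding diff path_overlap_weight_conv by (simp, rule sum.cong) (use h in auto)
    then show ?thesis by blast
  next
    assume h: "\<forall>w \<in> V - {rt}. ancestor w d \<longrightarrow> ancestor w a \<longrightarrow> ancestor w c"
    have "common_path_weight \<rho> a d - common_path_weight \<rho> c d = (-1) * path_overlap_weight \<rho> a c d" for \<rho>
      unfolding diff path_overlap_weight_conv by (simp add: sum_negf[symmetric], rule sum.cong) (use h in auto)
    then show ?thesis by blast
  qed
qed

lemma path_overlap_weight_nonneg: "\<forall>e\<in>E. \<rho> e > 0 \<Longrightarrow> path_overlap_weight \<rho> a c d \<ge> 0"
  unfolding path_overlap_weight_def using up_edge_in_E by (intro sum_nonneg) (auto intro: less_imp_le)

lemma path_overlap_weight_edge:
  assumes u: "u \<in> V - {rt}"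
  shows "path_overlap_weight \<rho> (parent u) u d = (if ancestor u d then \<rho> (up_edge u) else 0)"
proof -
  have "{w \<in> V - {rt}. ancestor w d \<and> ancestor w (parent u) \<noteq> ancestor w u} = (if ancestor u d then {u} else {})"
    using ancestor_iff_parent[OF u] not_ancestor_parent[OF u] u by auto
  then show ?thesis unfolding path_overlap_weight_def by simp
qed

lemma path_overlap_weight_ge:
  assumes pos: "\<forall>e\<in>E. \<rho> e > 0" and sub: "W \<subseteq> {w \<in> V - {rt}. ancestor w d \<and> ancestor w a \<noteq> ancestor w c}"
  shows "(\<Sum>w\<in>W. \<rho> (up_edge w)) \<le> path_overlap_weight \<rho> a c d"
  unfolding path_overlap_weight_def
  by (rule sum_mono2) (use finite_V sub pos up_edge_in_E in \<open>auto intro: less_imp_le\<close>)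

lemma ancestor_separates_parent:
  assumes u: "u \<in> V - {rt}" "\<not> ancestor u v" and w: "ancestor w (parent u) \<noteq> ancestor w v"
  shows "ancestor w u \<noteq> ancestor w v"
proof -
  have "w \<noteq> u" using w not_ancestor_parent[OF u(1)] u(2) by auto
  then show ?thesis using w ancestor_iff_parent[OF u(1)] by auto
qed

lemma not_ancestor_either:
  "u \<in> V \<Longrightarrow> v \<in> V \<Longrightarrow> u \<noteq> v \<Longrightarrow> (u \<noteq> rt \<and> \<not> ancestor u v) \<or> (v \<noteq> rt \<and> \<not> ancestor v u)"
  using ancestor_antisym ancestor_root by metis

lemma path_edge_crossing:
  "u \<in> V \<Longrightarrow> v \<in> V \<Longrightarrow> (u \<in> S) \<noteq> (v \<in> S) \<Longrightarrow>
    \<exists>w \<in> V - {rt}. (w \<in> S) \<noteq> (parent w \<in> S) \<and> ancestor w u \<noteq> ancestor w v"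
proof (induction "depth u + depth v" arbitrary: u v rule: less_induct)
  case less
  have step: "\<exists>w \<in> V - {rt}. (w \<in> S) \<noteq> (parent w \<in> S) \<and> ancestor w u' \<noteq> ancestor w v'"
    if uv: "u' \<in> V" "v' \<in> V" "(u' \<in> S) \<noteq> (v' \<in> S)" "depth u' + depth v' = depth u + depth v"
      and u': "u' \<noteq> rt" "\<not> ancestor u' v'" for u' v'
  proof (cases "(u' \<in> S) = (parent u' \<in> S)")
    case False
    then show ?thesis using uv u' ancestor_refl by blast
  next
    case True
    have "depth (parent u') + depth v' < depth u + depth v"
      using depth_parent[of u'] uv u' by simp
    then obtain w where w: "w \<in> V - {rt}" "(w \<in> S) \<noteq> (parent w \<in> S)"
        "ancestor w (parent u') \<noteq> ancestor w v'"
      using less.hyps[OF _ parent_in_V[OF uv(1)] uv(2)] True uv(3) by blast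
    then show ?thesis using ancestor_separates_parent[of u' v' w] uv(1) u' by blast
  qed
  have "u \<noteq> v" using less.prems(3) by auto
  from not_ancestor_either[OF less.prems(1,2) this] show ?case
    using step[OF less.prems] step[OF less.prems(2,1)] less.prems(3) by (auto simp: add.commute)
qed

lemma non_edge_second_edge_aux:
  assumes a: "a \<in> V" and c: "c \<in> V" and ne: "{a, c} \<notin> E"
    and u: "u \<in> V - {rt}" "ancestor u a" "\<not> ancestor u c"
  shows "\<exists>u' \<in> V - {rt}. u' \<noteq> u \<and> ancestor u' a \<noteq> ancestor u' c"
proof (rule ccontr)
  assume "\<not> ?thesis"
  then have only: "\<And>w. w \<in> V - {rt} \<Longrightarrow> w \<noteq> u \<Longrightarrow> ancestor w a = ancestor w c" by blast
  have au: "a = u"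
  proof (rule ccontr)
    assume "a \<noteq> u"
    moreover have "a \<noteq> rt" using u ancestor_root by auto
    ultimately have "ancestor a c" using only[of a] a ancestor_refl by auto
    then show False using u ancestor_trans by blast
  qed
  have cu: "c \<noteq> u" using u ancestor_refl by auto
  have "ancestor (parent u) c" if "parent u \<noteq> rt"
    using only[of "parent u"] that parent_in_V parent_neq u ancestor_parent au by auto
  moreover have "ancestor c (parent u)" if "c \<noteq> rt"
    using only[of c] that c cu ancestor_refl ancestor_iff_parent[OF u(1)] au by auto
  ultimately have "c = parent u"
    using ancestor_root ancestor_antisym c by metis
  then have "{a, c} = up_edge u" using au unfolding up_edge_def by auto
  then show False using ne up_edge_in_E[OF u(1)] by simp
qed

lemma non_edge_second_edge:
  assumes a: "a \<in> V" and c: "c \<in> V" and ne: "{a, c} \<notin> E"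
    and u: "u \<in> V - {rt}" "ancestor u a \<noteq> ancestor u c"
  shows "\<exists>u' \<in> V - {rt}. u' \<noteq> u \<and> ancestor u' a \<noteq> ancestor u' c"
proof (cases "ancestor u a")
  case True
  then show ?thesis using non_edge_second_edge_aux[OF a c ne u(1) True] u by auto
next
  case False
  have "{c, a} \<notin> E" using ne by (simp add: insert_commute)
  then show ?thesis using non_edge_second_edge_aux[OF c a _ u(1)] u False by metis
qed

lemma path_overlap_weight_edge_le:
  assumes pos: "\<forall>e\<in>E. \<rho> e > 0" and u: "u \<in> V - {rt}" and sep: "ancestor u a \<noteq> ancestor u c"
  shows "path_overlap_weight \<rho> (parent u) u d \<le> path_overlap_weight \<rho> a c d"
proof -
  have "path_overlap_weight \<rho> (parent u) u d = (\<Sum>w \<in> (if ancestor u d then {u} else {}). \<rho> (up_edge w))"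
    using path_overlap_weight_edge[OF u] by simp
  also have "\<dots> \<le> path_overlap_weight \<rho> a c d"
    by (rule path_overlap_weight_ge[OF pos]) (use u sep in auto)
  finally show ?thesis .
qed

lemma path_overlap_weight_edge_add_le:
  assumes pos: "\<forall>e\<in>E. \<rho> e > 0" and u: "u \<in> V - {rt}" and sep: "ancestor u a \<noteq> ancestor u c"
    and u': "u' \<in> V - {rt}" "u' \<noteq> u" "ancestor u' a \<noteq> ancestor u' c"
  shows "path_overlap_weight \<rho> (parent u) u u' + \<rho> (up_edge u') \<le> path_overlap_weight \<rho> a c u'"
proof -
  let ?W = "insert u' (if ancestor u u' then {u} else {})"
  have "path_overlap_weight \<rho> (parent u) u u' + \<rho> (up_edge u') = (\<Sum>w\<in>?W. \<rho> (up_edge w))"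
    using path_overlap_weight_edge[OF u] u'(2) by auto
  also have "\<dots> \<le> path_overlap_weight \<rho> a c u'"
    by (rule path_overlap_weight_ge[OF pos]) (use u sep u' ancestor_refl in auto)
  finally show ?thesis .
qed

lemma quad_cov_common_path_weight_diff:
  "quad_cov Vp Vq C (common_path_weight \<rho> a d - common_path_weight \<rho> c d)
                    (common_path_weight \<rho>' a d - common_path_weight \<rho>' c d)
   = quad_cov Vp Vq C (path_overlap_weight \<rho> a c d) (path_overlap_weight \<rho>' a c d)"
proof -
  obtain s :: real where s: "s = 1 \<or> s = -1"
    "\<And>\<rho>. common_path_weight \<rho> a d - common_path_weight \<rho> c d = s * path_overlap_weight \<rho> a c d"
    using common_path_weight_diff by blast
  then show ?thesis using quad_cov_scale[of Vp Vq C s] by auto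
qed

definition strict_cycle_property :: "'v set set \<Rightarrow> ('v set \<Rightarrow> real) \<Rightarrow> bool" where
  "strict_cycle_property Efull w \<longleftrightarrow> (\<forall>a\<in>V. \<forall>c\<in>V. \<forall>u\<in>V - {rt}.
     {a, c} \<in> Efull \<longrightarrow> {a, c} \<notin> E \<longrightarrow> ancestor u a \<noteq> ancestor u c \<longrightarrow> w (up_edge u) < w {a, c})"

lemma MST_exchange:
  fixes w :: "'v set \<Rightarrow> real"
  assumes cyc: "strict_cycle_property Efull w"
    and E_sub: "E \<subseteq> Efull"
    and F: "is_spanning_tree V Efull F" and f: "f \<in> F" "f \<notin> E"
  shows "\<exists>F'. is_spanning_tree V Efull F' \<and> card (F' - E) < card (F - E) \<and> (\<Sum>e\<in>F'. w e) < (\<Sum>e\<in>F. w e)"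
proof -
  have Ft: "is_tree V F" "F \<subseteq> Efull" using F unfolding is_spanning_tree_def by auto
  have finF: "finite F" using Ft(1) graph_on_finite unfolding is_tree_def by blast
  obtain a c where ac: "a \<in> V" "c \<in> V" "f = {a, c}"
    using Ft(1) f unfolding is_tree_def graph_on_def by blast
  define S where "S = {y. (a, y) \<in> (adj (F - {f}))\<^sup>*}"
  have "a \<in> S" "c \<notin> S"
    unfolding S_def using tree_remove_edge_disconnects[OF Ft(1) f(1) ac(3)] by simp_all
  then obtain u where u: "u \<in> V - {rt}" "(u \<in> S) \<noteq> (parent u \<in> S)" "ancestor u a \<noteq> ancestor u c"
    using path_edge_crossing[OF ac(1,2), of S] by auto
  then obtain y1 y2 where y: "{y1, y2} = up_edge u" "y1 \<in> S" "y2 \<notin> S"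
    unfolding up_edge_def by (cases "u \<in> S") (auto simp: insert_commute)
  have yV: "y1 \<in> V" "y2 \<in> V"
    using y(1) u(1) parent_in_V unfolding up_edge_def by (auto simp: doubleton_eq_iff)
  define F' where "F' = insert (up_edge u) (F - {f})"
  have new: "up_edge u \<notin> F - {f}" and tree': "is_tree V F'"
    using tree_exchange[OF Ft(1) f(1) ac(3) yV] y unfolding S_def F'_def by auto
  have F'_sub: "F' \<subseteq> Efull" unfolding F'_def using Ft(2) up_edge_in_E[OF u(1)] E_sub by auto
  have "F' - E = (F - E) - {f}" unfolding F'_def using up_edge_in_E[OF u(1)] by auto
  then have card_less: "card (F' - E) < card (F - E)" using f finF by (metis DiffI card_Diff1_less finite_Diff)
  have "{a, c} \<in> Efull" "{a, c} \<notin> E" using f Ft(2) ac(3) by auto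
  then have "w (up_edge u) < w f" using cyc ac u unfolding strict_cycle_property_def by blast
  then have "(\<Sum>e\<in>F'. w e) < (\<Sum>e\<in>F. w e)" unfolding F'_def using new finF f(1) by (simp add: sum_diff1)
  then show ?thesis using F'_sub tree' card_less unfolding is_spanning_tree_def by blast
qed

lemma spanning_tree_weight_gt:
  fixes w :: "'v set \<Rightarrow> real"
  assumes cyc: "strict_cycle_property Efull w"
    and E_sub: "E \<subseteq> Efull"
  shows "is_spanning_tree V Efull F \<Longrightarrow> F \<noteq> E \<Longrightarrow> (\<Sum>e\<in>E. w e) < (\<Sum>e\<in>F. w e)"
proof (induction "card (F - E)" arbitrary: F rule: less_induct)
  case less
  have Ft: "is_tree V F" using less.prems unfolding is_spanning_tree_def by auto
  obtain f where f: "f \<in> F" "f \<notin> E"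
  proof (rule ccontr)
    assume "\<not> thesis"
    then have "F \<subseteq> E" using that by blast
    moreover have "card F = card E" using Ft card_E unfolding is_tree_def by simp
    ultimately have "F = E" using card_subset_eq finite_E by blast
    then show False using less.prems by simp
  qed
  obtain F' where F': "is_spanning_tree V Efull F'" "card (F' - E) < card (F - E)"
      "(\<Sum>e\<in>F'. w e) < (\<Sum>e\<in>F. w e)"
    using MST_exchange[OF cyc E_sub less.prems(1) f] by blast
  show ?case
  proof (cases "F' = E")
    case True then show ?thesis using F'(3) by simp
  next
    case False then show ?thesis using less.hyps[OF F'(2) F'(1) False] F'(3) by simp
  qed
qed

lemma cycle_property_unique_MST:
  fixes w :: "'v set \<Rightarrow> real"
  assumes cyc: "strict_cycle_property Efull w"
    and E_sub: "E \<subseteq> Efull"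
  shows "{F. is_MST V Efull w F} = {E}"
proof -
  note gt = spanning_tree_weight_gt[OF cyc E_sub]
  have E_span: "is_spanning_tree V Efull E" unfolding is_spanning_tree_def using E_sub tree by simp
  then have "is_MST V Efull w E" unfolding is_MST_def using gt by (metis order.order_iff_strict)
  moreover have "F = E" if "is_MST V Efull w F" for F
    using that E_span gt unfolding is_MST_def by force
  ultimately show ?thesis by blast
qed

end

locale lcpf_model = rooted_tree V E rt + prob_space M
  for V :: "'v set" and E :: "'v set set" and rt :: 'v and M :: "'w measure" +
  fixes r x :: "'v set \<Rightarrow> real" and p q :: "'v \<Rightarrow> 'w \<Rightarrow> real" and v0 :: real
  assumes r_pos: "\<forall>e\<in>E. r e > 0" and x_pos: "\<forall>e\<in>E. x e > 0"
    and square_integrable_injections: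
      "\<And>d. d \<in> V - {rt} \<Longrightarrow> square_integrable (p d) \<and> square_integrable (q d)"
    and cov_offdiag: "\<And>a b. a \<in> V - {rt} \<Longrightarrow> b \<in> V - {rt} \<Longrightarrow> a \<noteq> b \<Longrightarrow>
      cov M (p a) (p b) = 0 \<and> cov M (q a) (q b) = 0 \<and> cov M (q a) (p b) = 0"
    and cov_diag: "\<And>a. a \<in> V - {rt} \<Longrightarrow> cov M (q a) (p a) \<ge> 0"
begin

abbreviation voltage :: "'v \<Rightarrow> 'w \<Rightarrow> real" where
  "voltage \<equiv> lcpf_voltage V rt E r x v0 p q"

text \<open>The variance of \<open>R * p d + X * q d\<close>.\<close>
abbreviation injection_var :: "'v \<Rightarrow> real \<Rightarrow> real \<Rightarrow> real" where
  "injection_var d \<equiv> quad_cov (cov M (p d) (p d)) (cov M (q d) (q d)) (cov M (p d) (q d))"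

lemma injection_cov_nonneg:
  assumes "d \<in> V - {rt}"
  shows "0 \<le> cov M (p d) (p d)" "0 \<le> cov M (q d) (q d)" "0 \<le> cov M (p d) (q d)"
  using cov_sq_nonneg cov_diag[OF assms] cov_swap by auto

lemma voltage_centered:
  assumes a: "a \<in> V"
  shows "voltage a \<omega> - (\<integral>\<omega>'. voltage a \<omega>' \<partial>M) =
    (\<Sum>d\<in>V - {rt}. common_path_weight r a d * (p d \<omega> - (\<integral>\<omega>'. p d \<omega>' \<partial>M))
                  + common_path_weight x a d * (q d \<omega> - (\<integral>\<omega>'. q d \<omega>' \<partial>M)))"
proof (cases "a = rt")
  case True
  then show ?thesis unfolding lcpf_voltage_def by (simp add: common_path_weight_root prob_space)
next
  case False
  have "voltage a = (\<lambda>\<omega>. \<Sum>d\<in>V - {rt}. common_path_weight r a d * p d \<omega> + common_path_weight x a d * q d \<omega>)"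
    unfolding lcpf_voltage_def inv_on_red_laplacian[OF r_pos] inv_on_red_laplacian[OF x_pos]
    using False a by (simp add: common_path_matrix_def)
  moreover have "finite (V - {rt})" using finite_V by simp
  note sum_lincomb_centered[OF this square_integrable_injections]
  ultimately show ?thesis by simp
qed

lemma phi_voltage:
  assumes a: "a \<in> V" and c: "c \<in> V"
  shows "phi M voltage a c =
    (\<Sum>d\<in>V - {rt}. injection_var d (path_overlap_weight r a c d) (path_overlap_weight x a c d))"
proof -
  have "phi M voltage a c =
      (\<integral>\<omega>. (\<Sum>d\<in>V - {rt}. (common_path_weight r a d - common_path_weight r c d) * (p d \<omega> - (\<integral>\<omega>'. p d \<omega>' \<partial>M))
        + (common_path_weight x a d - common_path_weight x c d) * (q d \<omega> - (\<integral>\<omega>'. q d \<omega>' \<partial>M)))\<^sup>2 \<partial>M)"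
    unfolding phi_def voltage_centered[OF a] voltage_centered[OF c]
    by (simp add: sum_subtractf[symmetric] algebra_simps)
  also have "\<dots> = (\<Sum>d\<in>V - {rt}. injection_var d (common_path_weight r a d - common_path_weight r c d)
                                      (common_path_weight x a d - common_path_weight x c d))"
    using finite_V by (intro second_moment_uncorrelated square_integrable_injections cov_offdiag) auto
  also have "\<dots> = (\<Sum>d\<in>V - {rt}. injection_var d (path_overlap_weight r a c d) (path_overlap_weight x a c d))"
    by (simp add: quad_cov_common_path_weight_diff)
  finally show ?thesis .
qed

lemma injection_var_add_edge:
  assumes d: "d \<in> V - {rt}" and e: "e \<in> E" and R: "0 \<le> R" and X: "0 \<le> X"
  shows "injection_var d R X + k1 V rt E r x M p q \<le> injection_var d (R + r e) (X + x e)"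
proof -
  have min_edge: "0 < Min (\<rho> ` E) \<and> Min (\<rho> ` E) \<le> \<rho> e" if pos: "\<forall>e\<in>E. \<rho> e > 0" for \<rho>
  proof -
    have "Min (\<rho> ` E) \<in> \<rho> ` E" using finite_E e by (intro Min_in) auto
    then show ?thesis using pos finite_E e by (auto intro: Min_le)
  qed
  have "Min ((\<lambda>d. cov M (p d) (p d) + cov M (q d) (q d) + 2 * cov M (p d) (q d)) ` (V - {rt}))
      \<le> cov M (p d) (p d) + cov M (q d) (q d) + 2 * cov M (p d) (q d)"
    using finite_V d by (intro Min_le) auto
  then show ?thesis unfolding k1_def
    using quad_cov_add[OF injection_cov_nonneg[OF d] R X] min_edge[OF r_pos] min_edge[OF x_pos] by blast
qed

lemma phi_edge_gap:
  assumes u: "u \<in> V - {rt}" and a: "a \<in> V" and c: "c \<in> V" and ne: "{a, c} \<notin> E"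
    and sep: "ancestor u a \<noteq> ancestor u c"
  shows "phi M voltage (parent u) u + k1 V rt E r x M p q \<le> phi M voltage a c"
proof -
  obtain u' where u': "u' \<in> V - {rt}" "u' \<noteq> u" "ancestor u' a \<noteq> ancestor u' c"
    using non_edge_second_edge[OF a c ne u sep] by blast
  let ?f = "\<lambda>d. injection_var d (path_overlap_weight r (parent u) u d) (path_overlap_weight x (parent u) u d)"
  let ?g = "\<lambda>d. injection_var d (path_overlap_weight r a c d) (path_overlap_weight x a c d)"
  have "?f d \<le> ?g d" if "d \<in> V - {rt}" for d
    by (rule quad_cov_mono[OF injection_cov_nonneg[OF that]
          path_overlap_weight_nonneg[OF r_pos] path_overlap_weight_edge_le[OF r_pos u sep]
          path_overlap_weight_nonneg[OF x_pos] path_overlap_weight_edge_le[OF x_pos u sep]])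
  moreover have "?f u' + k1 V rt E r x M p q \<le> ?g u'"
  proof -
    have "?f u' + k1 V rt E r x M p q \<le> injection_var u'
        (path_overlap_weight r (parent u) u u' + r (up_edge u'))
        (path_overlap_weight x (parent u) u u' + x (up_edge u'))"
      by (rule injection_var_add_edge[OF u'(1) up_edge_in_E[OF u'(1)]
            path_overlap_weight_nonneg[OF r_pos] path_overlap_weight_nonneg[OF x_pos]])
    also have "\<dots> \<le> ?g u'"
    proof (rule quad_cov_mono[OF injection_cov_nonneg[OF u'(1)]])
      show "0 \<le> path_overlap_weight r (parent u) u u' + r (up_edge u')"
        using path_overlap_weight_nonneg[OF r_pos] r_pos up_edge_in_E[OF u'(1)]
        by (simp add: add_nonneg_nonneg less_imp_le)
      show "0 \<le> path_overlap_weight x (parent u) u u' + x (up_edge u')"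
        using path_overlap_weight_nonneg[OF x_pos] x_pos up_edge_in_E[OF u'(1)]
        by (simp add: add_nonneg_nonneg less_imp_le)
    qed (use path_overlap_weight_edge_add_le[OF _ u sep u'] r_pos x_pos in auto)
    finally show ?thesis .
  qed
  ultimately have "(\<Sum>d\<in>V - {rt}. ?f d) + k1 V rt E r x M p q \<le> (\<Sum>d\<in>V - {rt}. ?g d)"
    using finite_V u'(1) by (intro sum_mono_add_gap) auto
  then show ?thesis using phi_voltage u a c parent_in_V by simp
qed

end

theorem theorem9:
  fixes V :: "'v set" and E Efull :: "'v set set" and rt :: 'v
    and r x :: "'v set \<Rightarrow> real" and M :: "'w measure"
    and p q :: "'v \<Rightarrow> 'w \<Rightarrow> real" and v0 :: real
    and phihat :: "'v set \<Rightarrow> real"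
  assumes tree: "is_tree V E"
    and rt: "rt \<in> V" "degree E rt = 1"
    and r_pos: "\<forall>e\<in>E. r e > 0" and x_pos: "\<forall>e\<in>E. x e > 0"
    and prob: "prob_space M"
    and rv: "\<forall>d\<in>V - {rt}. p d \<in> borel_measurable M \<and> q d \<in> borel_measurable M
               \<and> integrable M (\<lambda>\<omega>. (p d \<omega>)\<^sup>2) \<and> integrable M (\<lambda>\<omega>. (q d \<omega>)\<^sup>2)"
    and cov_offdiag: "\<forall>a\<in>V - {rt}. \<forall>b\<in>V - {rt}. a \<noteq> b \<longrightarrow>
               cov M (p a) (p b) = 0 \<and> cov M (q a) (q b) = 0 \<and> cov M (q a) (p b) = 0"
    and cov_diag: "\<forall>a\<in>V - {rt}. cov M (q a) (p a) \<ge> 0"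
    and full: "E \<subseteq> Efull" "graph_on V Efull"
    and est: "\<forall>a\<in>V. \<forall>b\<in>V. a \<noteq> b \<longrightarrow>
               \<bar>phihat {a, b} - phi M (lcpf_voltage V rt E r x v0 p q) a b\<bar>
                 < k1 V rt E r x M p q / 2"
  shows "{F. is_MST V Efull phihat F} = {E}"
proof -
  interpret rooted_tree V E rt using tree rt(1) by unfold_locales
  interpret prob_space M using prob .
  interpret lcpf_model V E rt M r x p q v0
    by unfold_locales (use r_pos x_pos rv cov_offdiag cov_diag in \<open>auto simp: square_integrable_def\<close>)
  have "strict_cycle_property Efull phihat"
    unfolding strict_cycle_property_def
  proof (intro ballI impI)
    fix a c u assume a: "a \<in> V" and c: "c \<in> V" and u: "u \<in> V - {rt}"
      and ne: "{a, c} \<notin> E" and sep: "ancestor u a \<noteq> ancestor u c"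
    have edge: "\<bar>phihat {parent u, u} - phi M voltage (parent u) u\<bar> < k1 V rt E r x M p q / 2"
      using est[rule_format, OF parent_in_V[of u] _ parent_neq[OF u]] u by blast
    have "a \<noteq> c" using sep by auto
    then have non_edge: "\<bar>phihat {a, c} - phi M voltage a c\<bar> < k1 V rt E r x M p q / 2"
      using est a c by blast
    show "phihat (up_edge u) < phihat {a, c}"
      using edge non_edge phi_edge_gap[OF u a c ne sep] unfolding up_edge_def abs_less_iff by linarith
  qed
  then show ?thesis by (rule cycle_property_unique_MST[OF _ full(1)])
qed

end
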